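(* Let $\{X(s),s\in\mathbb R^d\}$ be a strictly stationary, stochastically continuous real random field whose marginal c.d.f. $F$ is continuous and strictly increasing on its support, which is an interval. Fix $t\in\mathbb R^d$. For each $n\in\mathbb N$ let $T_f^{(n)}=\{t^{(n)}_1,\dots,t^{(n)}_n\}\subset\mathbb R^d$, $\mathbf X_n=(X(t^{(n)}_1),\dots,X(t^{(n)}_n))^\top$, let $\Lambda_n\subseteq\mathbb R^n$ and $g_n:\Lambda_n\times\mathbb R^n\to\mathbb R$ measurable, $\widehat X_\lambda(t)=g_n(\lambda,\mathbf X_n)$, and $\Lambda_{g,n}=\{\lambda\in\Lambda_n:\widehat X_\lambda(t)\text{ has c.d.f. }F\}$. Assume that for every $n$ and every $k\in\{1,\dots,n\}$ there exists $\tilde\lambda\in\Lambda_{g,n}$ with $g_n(\tilde\lambda,\mathbf X_n)=X(t^{(n)}_k)$ a.s., and that $\min_{k=1,\dots,n}\|t^{(n)}_k-t\|_2\to0$ as $n\to\infty$. Let $\gamma>0$ and let $\hat\lambda_n$ be a minimizer (assumed to exist) of one of the following problems (the same one for all $n$): (a) $\mathbf E F(X(t)\vee\widehat X_\lambda(t))$ over $\lambda\in\Lambda_{g,n}$; (b) $2\,\mathbf E F(X(t)\vee\widehat X_\lambda(t))-\mathbf E F(\widehat X_\lambda(t))$ over $\lambda\in\Lambda_n$; (c) $2\,\mathbf E F(X(t)\vee\widehat X_\lambda(t))-\mathbf E F(\widehat X_\lambda(t))+\gamma\big[\mathbf E F^2(\widehat X_\lambda(t))-\mathbf E[F(\widehat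 X_\lambda(t))\vee Y_\lambda]\big]$ over $\lambda\in\Lambda_n$, where $Y_\lambda$ is a copy of $F(\widehat X_\lambda(t))$ independent of it. Then $\widehat X_{\hat\lambda_n}(t)\to X(t)$ in probability as $n\to\infty$.
   Context: $a\vee b=\max\{a,b\}$. A random field is stochastically continuous if $X(s_k)\to X(s)$ in probability whenever $s_k\to s$. *)

theory Defs
  imports "HOL-Probability.Probability"
begin

definition conv_in_prob :: "'a measure \<Rightarrow> (nat \<Rightarrow> 'a \<Rightarrow> real) \<Rightarrow> ('a \<Rightarrow> real) \<Rightarrow> bool" where
  "conv_in_prob M Y Z \<longleftrightarrow>
     (\<forall>e>0. (\<lambda>n. measure M {\<omega> \<in> space M. \<bar>Y n \<omega> - Z \<omega>\<bar> > e}) \<longlonglongrightarrow> 0)"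

definition strictly_stationary :: "'a measure \<Rightarrow> ('d::euclidean_space \<Rightarrow> 'a \<Rightarrow> real) \<Rightarrow> bool" where
  "strictly_stationary M X \<longleftrightarrow>
     (\<forall>(m::nat) (s::nat \<Rightarrow> 'd) h.
        distr M (PiM {..<m} (\<lambda>_. borel)) (\<lambda>\<omega>. restrict (\<lambda>i. X (s i + h) \<omega>) {..<m})
      = distr M (PiM {..<m} (\<lambda>_. borel)) (\<lambda>\<omega>. restrict (\<lambda>i. X (s i) \<omega>) {..<m}))"

definition stoch_continuous :: "'a measure \<Rightarrow> ('d::euclidean_space \<Rightarrow> 'a \<Rightarrow> real) \<Rightarrow> bool" where
  "stoch_continuous M X \<longleftrightarrow>
     (\<forall>s (sk::nat \<Rightarrow> 'd). sk \<longlonglongrightarrow> s \<longrightarrow> conv_in_prob M (\<lambda>k. X (sk k)) (X s))"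

definition dist_support :: "real measure \<Rightarrow> real set" where
  "dist_support \<mu> = {x. \<forall>e>0. measure \<mu> (ball x e) > 0}"

text \<open>Vector of observations X_n = (X(t_1^(n)),...,X(t_n^(n))), indices 0..n-1.\<close>
definition obs_vec :: "('d \<Rightarrow> 'a \<Rightarrow> real) \<Rightarrow> (nat \<Rightarrow> nat \<Rightarrow> 'd) \<Rightarrow> nat \<Rightarrow> 'a \<Rightarrow> (nat \<Rightarrow> real)" where
  "obs_vec X tp n \<omega> = restrict (\<lambda>i. X (tp n i) \<omega>) {..<n}"

definition predictor where
  "predictor X tp g n l \<omega> = g n l (obs_vec X tp n \<omega>)"

definition Lambda_g where
  "Lambda_g M X tp g \<Lambda> F n =
     {l \<in> \<Lambda> n. \<forall>x. measure M {\<omega> \<in> space M. predictor X tp g n l \<omega> \<le> x} = F x}"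

definition crit_a where
  "crit_a M X tp g F t n l =
     (\<integral>\<omega>. F (max (X t \<omega>) (predictor X tp g n l \<omega>)) \<partial>M)"

definition crit_b where
  "crit_b M X tp g F t n l =
     2 * (\<integral>\<omega>. F (max (X t \<omega>) (predictor X tp g n l \<omega>)) \<partial>M)
       - (\<integral>\<omega>. F (predictor X tp g n l \<omega>) \<partial>M)"

text \<open>The independent copy Y_\<lambda> is realised on the product space M \<otimes> M.\<close>
definition crit_c where
  "crit_c M X tp g F t (\<gamma>::real) n l =
     crit_b M X tp g F t n l
     + \<gamma> * ((\<integral>\<omega>. (F (predictor X tp g n l \<omega>))\<^sup>2 \<partial>M)
            - (\<integral>p. max (F (predictor X tp g n l (fst p))) (F (predictor X tp g n l (snd p))) \<partial>(M \<Otimes>\<^sub>M M)))"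

end

theory Submission
  imports Defs
begin

text \<open>
  Write \<open>U = F(X(t))\<close> and \<open>V\<^sub>\<lambda> = F(\<widehat>X\<^sub>\<lambda>(t))\<close>. Since \<open>F\<close> is nondecreasing,
  \<open>F(a \<or> b) = (F a + F b + |F a - F b|)/2\<close>, so \<open>2 E F(X(t) \<or> \<widehat>X\<^sub>\<lambda>(t)) = E U + E V\<^sub>\<lambda> + E|V\<^sub>\<lambda> - U|\<close>.
  Hence criterion (b) is \<open>E U + E|V\<^sub>\<lambda> - U|\<close>, criterion (a) is the same up to a constant because
  \<open>E V\<^sub>\<lambda> = E U\<close> on \<open>\<Lambda>\<^sub>g\<^sub>,\<^sub>n\<close>, and in (c) the bracket plus \<open>1/3\<close> is the Cramer-von Mises distance
  \<open>\<integral>\<^sub>0\<^sup>1 (P(V\<^sub>\<lambda> \<le> u) - u)\<^sup>2 du\<close>, which is nonnegative and vanishes when \<open>\<widehat>X\<^sub>\<lambda>(t)\<close> has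
  c.d.f. \<open>F\<close>. So in every case the minimizer satisfies
  \<open>E|F(\<widehat>X\<^sub>\<lambda>\<^sub>n(t)) - U| \<le> E|F(X(t\<^sub>k)) - U|\<close> for the design point \<open>t\<^sub>k\<close> nearest to \<open>t\<close>,
  and the right-hand side tends to 0 by stochastic continuity and uniform continuity of \<open>F\<close>.
  Finally, as \<open>F\<close> is strictly increasing on the support interval, it separates points
  uniformly on every compact band \<open>\<delta> \<le> F \<le> 1 - \<delta>\<close>, so \<open>E|F(Y\<^sub>n) - F(Z)| \<rightarrow> 0\<close> forces
  \<open>Y\<^sub>n \<rightarrow> Z\<close> in probability.
\<close>

definition L1_dist_comp :: "'a measure \<Rightarrow> (real \<Rightarrow> real) \<Rightarrow> ('a \<Rightarrow> real) \<Rightarrow> ('a \<Rightarrow> real) \<Rightarrow> real" where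
  "L1_dist_comp M F Y Z = (\<integral>\<omega>. \<bar>F (Y \<omega>) - F (Z \<omega>)\<bar> \<partial>M)"

lemma L1_dist_comp_nonneg: "0 \<le> L1_dist_comp M F Y Z"
  unfolding L1_dist_comp_def by (rule Bochner_Integration.integral_nonneg) simp

lemma integral_unit_interval_step_product:
  fixes a b :: real
  assumes a: "0 \<le> a" "a \<le> 1" and b: "0 \<le> b" "b \<le> 1"
  shows "(\<integral>u. (indicator {a..} u - u) * (indicator {b..} u - u) \<partial>restrict_space lborel {0..1})
    = a\<^sup>2/2 + b\<^sup>2/2 - max a b + 1/3"
proof -
  have int1: "integrable lborel (\<lambda>u. u * indicator {c..1} u :: real)" for c
    using borel_integrable_atLeastAtMost[of c 1 "\<lambda>u. u"] by simp
  have int2: "integrable lborel (\<lambda>u. u\<^sup>2 * indicator {0..1} u :: real)"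
    by (rule borel_integrable_atLeastAtMost) simp
  have I0: "(\<integral>u. indicator {c..1} u \<partial>lborel) = 1 - c" if "c \<le> 1" for c :: real
    using that by simp
  have I1: "(\<integral>u. u * indicator {c..1} u \<partial>lborel) = (1 - c\<^sup>2) / 2" if "c \<le> 1" for c :: real
    using integral_power[OF that, of 1] by (simp add: power2_eq_square)
  have I2: "(\<integral>u. u\<^sup>2 * indicator {0..1} u \<partial>lborel) = (1::real) / 3"
    using integral_power[of 0 1 2] by simp
  have "(\<integral>u. (indicator {a..} u - u) * (indicator {b..} u - u) \<partial>restrict_space lborel {0..1})
      = (\<integral>u. indicator {max a b..1} u - u * indicator {a..1} u - u * indicator {b..1} u
           + u\<^sup>2 * indicator {0..1} u \<partial>lborel)"
    by (subst integral_restrict_space, simp, rule Bochner_Integration.integral_cong)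
       (use a b in \<open>auto simp: indicator_def power2_eq_square algebra_simps\<close>)
  also have "\<dots> = (1 - max a b) - (1 - a\<^sup>2)/2 - (1 - b\<^sup>2)/2 + 1/3"
    using a b int1 int2 by (simp add: I0 I1 I2)
  finally show ?thesis by (simp add: field_simps)
qed

lemma (in prob_space) integral_pair_measure_mult:
  fixes f g :: "'a \<Rightarrow> real"
  assumes [measurable]: "f \<in> borel_measurable M" "g \<in> borel_measurable M"
    and f_bound: "\<And>\<omega>. \<omega> \<in> space M \<Longrightarrow> \<bar>f \<omega>\<bar> \<le> B"
    and g_bound: "\<And>\<omega>. \<omega> \<in> space M \<Longrightarrow> \<bar>g \<omega>\<bar> \<le> B"
  shows "(\<integral>p. f (fst p) * g (snd p) \<partial>(M \<Otimes>\<^sub>M M)) = (\<integral>\<omega>. f \<omega> \<partial>M) * (\<integral>\<omega>. g \<omega> \<partial>M)"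
proof -
  interpret P: pair_prob_space M M ..
  have "integrable (M \<Otimes>\<^sub>M M) (\<lambda>p. f (fst p) * g (snd p))"
  proof (rule P.integrable_const_bound[where B="B * B"])
    show "AE p in M \<Otimes>\<^sub>M M. norm (f (fst p) * g (snd p)) \<le> B * B"
      using f_bound g_bound
      by (intro AE_I2) (auto simp: space_pair_measure abs_mult intro!: mult_mono order_trans[OF abs_ge_zero])
  qed measurable
  from P.integral_fst'[OF this, symmetric]
  have "(\<integral>p. f (fst p) * g (snd p) \<partial>(M \<Otimes>\<^sub>M M)) = (\<integral>x. (\<integral>y. f x * g y \<partial>M) \<partial>M)"
    by simp
  also have "\<dots> = (\<integral>\<omega>. f \<omega> \<partial>M) * (\<integral>\<omega>. g \<omega> \<partial>M)"
    by simp
  finally show ?thesis .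
qed

lemma (in prob_space) integral_pair_measure_step_deviation_product:
  fixes V :: "'a \<Rightarrow> real"
  assumes [measurable]: "V \<in> borel_measurable M" and "0 \<le> u" "u \<le> 1"
  shows "(\<integral>p. (indicator {V (fst p)..} u - u) * (indicator {V (snd p)..} u - u) \<partial>(M \<Otimes>\<^sub>M M))
    = (prob {\<omega> \<in> space M. V \<omega> \<le> u} - u)\<^sup>2"
proof -
  have [measurable]: "(\<lambda>\<omega>. indicator {V \<omega>..} u - u) \<in> borel_measurable M"
    unfolding indicator_def atLeast_iff by measurable
  have "{\<omega> \<in> space M. V \<omega> \<le> u} \<in> events" by measurable
  have "(\<integral>\<omega>. indicator {V \<omega>..} u - u \<partial>M) = (\<integral>\<omega>. indicator {\<omega> \<in> space M. V \<omega> \<le> u} \<omega> - u \<partial>M)"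
    by (intro Bochner_Integration.integral_cong) (auto simp: indicator_def)
  also have "\<dots> = prob {\<omega> \<in> space M. V \<omega> \<le> u} - u"
    using \<open>{\<omega> \<in> space M. V \<omega> \<le> u} \<in> events\<close>
    by (subst Bochner_Integration.integral_diff)
       (auto simp: prob_space Int_absorb2 less_top[symmetric] intro!: integrable_real_indicator)
  moreover have "\<bar>indicator {a..} u - u\<bar> \<le> 1" for a
    using assms(2,3) by (auto simp: indicator_def)
  ultimately show ?thesis
    by (subst integral_pair_measure_mult[where B=1]) (auto simp: power2_eq_square)
qed

lemma (in prob_space) integral_pair_measure_half_squares_minus_max:
  fixes V :: "'a \<Rightarrow> real"
  assumes [measurable]: "V \<in> borel_measurable M"
    and V01: "\<And>\<omega>. \<omega> \<in> space M \<Longrightarrow> 0 \<le> V \<omega> \<and> V \<omega> \<le> 1"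
  shows "(\<integral>p. (V (fst p))\<^sup>2 / 2 + (V (snd p))\<^sup>2 / 2 - max (V (fst p)) (V (snd p)) + 1/3 \<partial>(M \<Otimes>\<^sub>M M))
    = (\<integral>\<omega>. (V \<omega>)\<^sup>2 \<partial>M) - (\<integral>p. max (V (fst p)) (V (snd p)) \<partial>(M \<Otimes>\<^sub>M M)) + 1/3"
proof -
  let ?MM = "M \<Otimes>\<^sub>M M"
  interpret P: pair_prob_space M M ..
  have bounded: "integrable ?MM w"
    if [measurable]: "w \<in> borel_measurable ?MM" and "\<And>p. p \<in> space ?MM \<Longrightarrow> \<bar>w p\<bar> \<le> 1"
    for w :: "'a \<times> 'a \<Rightarrow> real"
    using that(2) by (intro P.integrable_const_bound[where B=1] AE_I2) auto
  have V_le: "\<bar>V \<omega>\<bar> \<le> 1" "\<bar>(V \<omega>)\<^sup>2\<bar> \<le> 1" if "\<omega> \<in> space M" for \<omega>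
    using V01[OF that] by (auto simp: abs_le_iff power_le_one)
  have "(\<integral>p. (V (fst p))\<^sup>2 \<partial>?MM) = (\<integral>\<omega>. (V \<omega>)\<^sup>2 \<partial>M)"
    using integral_pair_measure_mult[of "\<lambda>\<omega>. (V \<omega>)\<^sup>2" "\<lambda>_. 1" 1] V_le by (simp add: prob_space)
  moreover have "(\<integral>p. (V (snd p))\<^sup>2 \<partial>?MM) = (\<integral>\<omega>. (V \<omega>)\<^sup>2 \<partial>M)"
    using integral_pair_measure_mult[of "\<lambda>_. 1" "\<lambda>\<omega>. (V \<omega>)\<^sup>2" 1] V_le by (simp add: prob_space)
  moreover have "integrable ?MM (\<lambda>p. (V (fst p))\<^sup>2)" "integrable ?MM (\<lambda>p. (V (snd p))\<^sup>2)"
    "integrable ?MM (\<lambda>p. max (V (fst p)) (V (snd p)))"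
    using V_le by (auto intro!: bounded simp: space_pair_measure abs_le_iff le_max_iff_disj)
  ultimately show ?thesis
    by (simp add: P.prob_space)
qed

text \<open>Both sides equal \<open>\<integral>\<^sub>0\<^sup>1 E[h(V,u) h(V',u)] du\<close> for independent copies \<open>V, V'\<close> and
  \<open>h(a,u) = 1[a \<le> u] - u\<close>; integrating in the other order gives the right-hand side.\<close>

lemma (in prob_space) cramer_von_mises_identity:
  fixes V :: "'a \<Rightarrow> real"
  assumes [measurable]: "V \<in> borel_measurable M"
    and V01: "\<And>\<omega>. \<omega> \<in> space M \<Longrightarrow> 0 \<le> V \<omega> \<and> V \<omega> \<le> 1"
  shows "(\<integral>u. (prob {\<omega> \<in> space M. V \<omega> \<le> u} - u)\<^sup>2 \<partial>restrict_space lborel {0..1})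
    = (\<integral>\<omega>. (V \<omega>)\<^sup>2 \<partial>M) - (\<integral>p. max (V (fst p)) (V (snd p)) \<partial>(M \<Otimes>\<^sub>M M)) + 1/3"
proof -
  let ?N = "restrict_space lborel {0..1::real}"
  let ?MM = "M \<Otimes>\<^sub>M M"
  interpret P: pair_prob_space M M ..
  interpret N: finite_measure ?N
    by (rule finite_measureI) (simp add: emeasure_restrict_space space_restrict_space)
  interpret Q: pair_sigma_finite ?MM ?N ..
  define h where "h a u = indicator {a..} u - u" for a u :: real
  have [measurable]: "(\<lambda>x. snd x) \<in> borel_measurable (?MM \<Otimes>\<^sub>M ?N)"
    by (rule measurable_compose[OF measurable_snd measurable_restrict_space1]) simp
  have "(\<integral>u. (prob {\<omega> \<in> space M. V \<omega> \<le> u} - u)\<^sup>2 \<partial>?N)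
      = (\<integral>u. (\<integral>p. h (V (fst p)) u * h (V (snd p)) u \<partial>?MM) \<partial>?N)"
    unfolding h_def
    by (intro Bochner_Integration.integral_cong refl integral_pair_measure_step_deviation_product[symmetric])
       (auto simp: space_restrict_space)
  also have "\<dots> = (\<integral>p. (\<integral>u. h (V (fst p)) u * h (V (snd p)) u \<partial>?N) \<partial>?MM)"
  proof (rule Q.Fubini_integral)
    show "integrable (?MM \<Otimes>\<^sub>M ?N) (\<lambda>(p, u). h (V (fst p)) u * h (V (snd p)) u)"
    proof (rule finite_measure.integrable_const_bound[where B=1])
      show "finite_measure (?MM \<Otimes>\<^sub>M ?N)"
        by (intro finite_measure_pair_measure P.finite_measure_axioms N.finite_measure_axioms)
      show "AE x in ?MM \<Otimes>\<^sub>M ?N. norm (case x of (p, u) \<Rightarrow> h (V (fst p)) u * h (V (snd p)) u) \<le> 1"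
        by (intro AE_I2)
           (auto simp: h_def indicator_def space_pair_measure space_restrict_space abs_mult intro!: mult_le_one)
    qed (simp add: h_def indicator_def split_beta')
  qed
  also have "\<dots> = (\<integral>p. (V (fst p))\<^sup>2 / 2 + (V (snd p))\<^sup>2 / 2 - max (V (fst p)) (V (snd p)) + 1/3 \<partial>?MM)"
    using V01 unfolding h_def
    by (intro Bochner_Integration.integral_cong refl integral_unit_interval_step_product)
       (auto simp: space_pair_measure)
  also have "\<dots> = (\<integral>\<omega>. (V \<omega>)\<^sup>2 \<partial>M) - (\<integral>p. max (V (fst p)) (V (snd p)) \<partial>?MM) + 1/3"
    using assms by (rule integral_pair_measure_half_squares_minus_max)
  finally show ?thesis .
qed

locale continuous_cdf_rv = prob_space M for M :: "'a measure" +
  fixes Z :: "'a \<Rightarrow> real" and F :: "real \<Rightarrow> real"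
  assumes measurable_Z[measurable]: "Z \<in> borel_measurable M"
    and prob_Z_le: "\<And>x. prob {\<omega> \<in> space M. Z \<omega> \<le> x} = F x"
    and continuous_on_F: "continuous_on UNIV F"
begin

lemma F_eq_cdf: "F = cdf (distr M borel Z)"
proof
  fix x
  have "Z -` {..x} \<inter> space M = {\<omega> \<in> space M. Z \<omega> \<le> x}" by auto
  then show "F x = cdf (distr M borel Z) x"
    by (simp add: cdf_def measure_distr prob_Z_le)
qed

lemma F_mono: "x \<le> y \<Longrightarrow> F x \<le> F y"
  unfolding F_eq_cdf
  using finite_borel_measure.cdf_nondecreasing[OF real_distribution.finite_borel_measure_M] by simp

lemma F_nonneg: "0 \<le> F x"
  unfolding F_eq_cdf
  using finite_borel_measure.cdf_nonneg[OF real_distribution.finite_borel_measure_M] by simp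

lemma F_le_1: "F x \<le> 1"
  unfolding F_eq_cdf using real_distribution.cdf_bounded_prob by simp

lemma abs_F_le_1: "\<bar>F x\<bar> \<le> 1"
  using F_nonneg F_le_1 by (simp add: abs_le_iff)

lemma F_at_bot: "(F \<longlongrightarrow> 0) at_bot"
  unfolding F_eq_cdf
  using finite_borel_measure.cdf_lim_at_bot[OF real_distribution.finite_borel_measure_M] by simp

lemma F_at_top: "(F \<longlongrightarrow> 1) at_top"
  unfolding F_eq_cdf using real_distribution.cdf_lim_at_top_prob by simp

lemma borel_measurable_F[measurable]: "F \<in> borel_measurable borel"
  using continuous_on_F by (rule borel_measurable_continuous_onI)

lemma F_max: "F (max x y) = max (F x) (F y)"
  using max_of_mono[of F x y] F_mono by (simp add: mono_def)

lemma F_tails: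
  assumes "0 < d" "d < 1"
  obtains L R where "\<And>x. x \<le> L \<Longrightarrow> F x < d" "\<And>x. R \<le> x \<Longrightarrow> 1 - d < F x"
proof -
  have "eventually (\<lambda>x. F x < d) at_bot" "eventually (\<lambda>x. 1 - d < F x) at_top"
    using order_tendstoD(2)[OF F_at_bot] order_tendstoD(1)[OF F_at_top] assms by auto
  then show ?thesis
    using that by (auto simp: eventually_at_bot_linorder eventually_at_top_linorder)
qed

lemma F_quantile:
  assumes "0 < u" "u < 1"
  obtains a where "F a = u" "\<And>x. F x \<le> u \<longleftrightarrow> x \<le> a"
proof -
  define S where "S = {x. F x \<le> u}"
  obtain L where L: "\<And>x. x \<le> L \<Longrightarrow> F x < u"
    using order_tendstoD(2)[OF F_at_bot assms(1)] by (auto simp: eventually_at_bot_linorder)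
  obtain R where R: "\<And>x. R \<le> x \<Longrightarrow> u < F x"
    using order_tendstoD(1)[OF F_at_top assms(2)] by (auto simp: eventually_at_top_linorder)
  have "L \<in> S" using L[of L] by (simp add: S_def)
  moreover have "bdd_above S"
  proof (rule bdd_aboveI)
    fix x assume "x \<in> S"
    then show "x \<le> R" using R[of x] by (cases "R \<le> x") (auto simp: S_def)
  qed
  moreover have "closed S"
    unfolding S_def by (intro closed_Collect_le continuous_on_F continuous_on_const)
  ultimately have "Sup S \<in> S" by (intro closed_contains_Sup) auto
  have le_Sup_iff: "F x \<le> u \<longleftrightarrow> x \<le> Sup S" for x
    using \<open>bdd_above S\<close> \<open>Sup S \<in> S\<close> F_mono[of x "Sup S"] by (auto intro: cSup_upper simp: S_def)
  have "F (Sup S) \<le> u" "u \<le> F (max R (Sup S))"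
    using \<open>Sup S \<in> S\<close> R[of "max R (Sup S)"] by (auto simp: S_def)
  moreover have "continuous_on {Sup S..max R (Sup S)} F"
    using continuous_on_F by (rule continuous_on_subset) simp
  ultimately obtain b where "Sup S \<le> b" "F b = u"
    using IVT'[of F "Sup S" u "max R (Sup S)"] by auto
  moreover have "b \<le> Sup S" using le_Sup_iff[of b] \<open>F b = u\<close> by simp
  ultimately show ?thesis using that[of "Sup S"] le_Sup_iff by auto
qed

lemma prob_F_Z_le:
  assumes "0 \<le> u" "u \<le> 1"
  shows "prob {\<omega> \<in> space M. F (Z \<omega>) \<le> u} = u"
proof -
  have interior: "prob {\<omega> \<in> space M. F (Z \<omega>) \<le> v} = v" if v: "0 < v" "v < 1" for v
  proof -
    obtain a where "F a = v" "\<And>x. F x \<le> v \<longleftrightarrow> x \<le> a" using F_quantile[OF v] by blast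
    then have "{\<omega> \<in> space M. F (Z \<omega>) \<le> v} = {\<omega> \<in> space M. Z \<omega> \<le> a}" by auto
    with \<open>F a = v\<close> show ?thesis by (simp add: prob_Z_le)
  qed
  consider "u = 0" | "0 < u \<and> u < 1" | "u = 1" using assms by linarith
  then show ?thesis
  proof cases
    case 1
    have "prob {\<omega> \<in> space M. F (Z \<omega>) \<le> 0} \<le> 0 + e" if "0 < e" for e
    proof -
      have "prob {\<omega> \<in> space M. F (Z \<omega>) \<le> 0} \<le> prob {\<omega> \<in> space M. F (Z \<omega>) \<le> min e (1/2)}"
        using that by (intro finite_measure_mono) (auto, measurable)
      also have "\<dots> \<le> e" using interior[of "min e (1/2)"] that by simp
      finally show ?thesis by simp
    qed
    then have "prob {\<omega> \<in> space M. F (Z \<omega>) \<le> 0} \<le> 0" by (rule field_le_epsilon)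
    with 1 show ?thesis using measure_nonneg[of M] by (simp add: order_antisym)
  next
    case 3
    then have "{\<omega> \<in> space M. F (Z \<omega>) \<le> u} = space M" using F_le_1 by auto
    then show ?thesis using 3 by (simp add: prob_space)
  qed (use interior in auto)
qed

lemma measure_distr_Z_Ioc: "a \<le> b \<Longrightarrow> measure (distr M borel Z) {a<..b} = F b - F a"
  using real_distribution.finite_borel_measure_M[OF real_distribution_distr[OF measurable_Z]]
    finite_borel_measure.emeasure_Ioc F_mono[of a b]
  by (simp add: measure_def F_eq_cdf[symmetric])

lemma mem_dist_support_if_F_increases:
  assumes "\<And>e. 0 < e \<Longrightarrow> F (a - e) < F (a + e)"
  shows "a \<in> dist_support (distr M borel Z)"
  unfolding dist_support_def
proof (intro CollectI allI impI)
  fix e :: real assume "0 < e"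
  then have "0 < measure (distr M borel Z) {a - e/2<..a + e/2}"
    using assms[of "e/2"] measure_distr_Z_Ioc[of "a - e/2" "a + e/2"] by simp
  also have "\<dots> \<le> measure (distr M borel Z) (ball a e)"
    using \<open>0 < e\<close> prob_space_distr[OF measurable_Z]
    by (intro finite_measure.finite_measure_mono prob_space.finite_measure) (auto simp: dist_real_def)
  finally show "0 < measure (distr M borel Z) (ball a e)" .
qed

lemma quantile_mem_dist_support:
  assumes "0 < u" "u < 1"
  obtains a where "F a = u" "\<And>x. F x \<le> u \<longleftrightarrow> x \<le> a" "a \<in> dist_support (distr M borel Z)"
proof -
  obtain a where a: "F a = u" "\<And>x. F x \<le> u \<longleftrightarrow> x \<le> a" using F_quantile[OF assms] by blast
  have "F (a - e) < F (a + e)" if "0 < e" for e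
    using a(2)[of "a - e"] a(2)[of "a + e"] that by simp
  with a show ?thesis by (intro that mem_dist_support_if_F_increases) auto
qed

lemma dist_support_point_le:
  assumes "0 < F x"
  obtains p where "p \<in> dist_support (distr M borel Z)" "p \<le> x"
proof -
  obtain a where "F a = F x / 2" "\<And>y. F y \<le> F x / 2 \<longleftrightarrow> y \<le> a" "a \<in> dist_support (distr M borel Z)"
    using quantile_mem_dist_support[of "F x / 2"] assms F_le_1[of x] by auto
  moreover from this(2)[of x] assms have "a \<le> x" by simp
  ultimately show ?thesis by (intro that)
qed

lemma dist_support_point_gt:
  assumes "F x < 1"
  obtains q where "q \<in> dist_support (distr M borel Z)" "x < q"
proof -
  obtain a where "F a = (F x + 1) / 2" "\<And>y. F y \<le> (F x + 1) / 2 \<longleftrightarrow> y \<le> a"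
      "a \<in> dist_support (distr M borel Z)"
    using quantile_mem_dist_support[of "(F x + 1) / 2"] assms F_nonneg[of x] by auto
  moreover from this(1) this(2)[of x] assms have "x < a" by (auto simp: order.order_iff_strict)
  ultimately show ?thesis by (intro that)
qed

lemma uniformly_continuous_F: "uniformly_continuous_on UNIV F"
  unfolding uniformly_continuous_on_def
proof (intro allI impI)
  fix e :: real assume "0 < e"
  define e' where "e' = min e (1/2)"
  have e': "0 < e'" "e' < 1" "e' \<le> e" using \<open>0 < e\<close> by (auto simp: e'_def)
  obtain L R where L: "\<And>x. x \<le> L \<Longrightarrow> F x < e'" and R: "\<And>x. R \<le> x \<Longrightarrow> 1 - e' < F x"
    using F_tails[OF e'(1,2)] by blast
  have "uniformly_continuous_on {L - 1..R + 1} F"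
    by (intro compact_uniformly_continuous continuous_on_subset[OF continuous_on_F]) auto
  then obtain d where d: "0 < d"
    "\<And>x y. x \<in> {L - 1..R + 1} \<Longrightarrow> y \<in> {L - 1..R + 1} \<Longrightarrow> dist y x < d \<Longrightarrow> dist (F y) (F x) < e"
    using \<open>0 < e\<close> unfolding uniformly_continuous_on_def by metis
  have "dist (F y) (F x) < e" if "dist y x < min 1 d" for x y
  proof (cases "x \<in> {L - 1..R + 1} \<and> y \<in> {L - 1..R + 1}")
    case True
    then show ?thesis using d(2) that by simp
  next
    case False
    then have "(x \<le> L \<and> y \<le> L) \<or> (R \<le> x \<and> R \<le> y)"
      using that by (auto simp: dist_real_def)
    then show ?thesis
      using L[of x] L[of y] R[of x] R[of y] F_nonneg[of x] F_nonneg[of y] F_le_1[of x] F_le_1[of y] e'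
      by (auto simp: dist_real_def)
  qed
  then show "\<exists>d>0. \<forall>x\<in>UNIV. \<forall>y\<in>UNIV. dist y x < d \<longrightarrow> dist (F y) (F x) < e"
    using d(1) by (intro exI[of _ "min 1 d"]) auto
qed

lemma integrable_F_comp[intro]: "Y \<in> borel_measurable M \<Longrightarrow> integrable M (\<lambda>\<omega>. F (Y \<omega>))"
  using abs_F_le_1 by (intro integrable_const_bound[where B=1]) auto

lemma integrable_abs_diff_F_comp[intro]:
  "Y \<in> borel_measurable M \<Longrightarrow> Y' \<in> borel_measurable M \<Longrightarrow>
    integrable M (\<lambda>\<omega>. \<bar>F (Y \<omega>) - F (Y' \<omega>)\<bar>)"
  by (intro integrable_abs Bochner_Integration.integrable_diff integrable_F_comp)

lemma integral_F_max:
  assumes [measurable]: "Y \<in> borel_measurable M"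
  shows "2 * (\<integral>\<omega>. F (max (Z \<omega>) (Y \<omega>)) \<partial>M)
    = (\<integral>\<omega>. F (Z \<omega>) \<partial>M) + (\<integral>\<omega>. F (Y \<omega>) \<partial>M) + L1_dist_comp M F Y Z"
proof -
  have "(\<integral>\<omega>. F (max (Z \<omega>) (Y \<omega>)) \<partial>M)
      = (\<integral>\<omega>. (F (Z \<omega>) + F (Y \<omega>) + \<bar>F (Y \<omega>) - F (Z \<omega>)\<bar>) / 2 \<partial>M)"
    by (intro Bochner_Integration.integral_cong) (simp_all only: F_max, auto simp: max_def)
  then show ?thesis
    by (simp add: L1_dist_comp_def Bochner_Integration.integral_add integrable_F_comp
        integrable_abs_diff_F_comp)
qed

lemma integral_comp_eq_if_same_cdf:
  fixes f :: "real \<Rightarrow> real"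
  assumes [measurable]: "Y \<in> borel_measurable M" "f \<in> borel_measurable borel"
    and "\<And>x. prob {\<omega> \<in> space M. Y \<omega> \<le> x} = F x"
  shows "(\<integral>\<omega>. f (Y \<omega>) \<partial>M) = (\<integral>\<omega>. f (Z \<omega>) \<partial>M)"
proof -
  interpret Y: continuous_cdf_rv M Y F
    using assms(3) continuous_on_F by unfold_locales auto
  have "distr M borel Y = distr M borel Z"
    by (rule cdf_unique) (auto simp: Y.F_eq_cdf[symmetric] F_eq_cdf[symmetric])
  then show ?thesis
    using integral_distr[of Y M borel f] integral_distr[of Z M borel f] by simp
qed

lemma integral_F_square_minus_max_ge:
  assumes [measurable]: "Y \<in> borel_measurable M"
  shows "- 1/3 \<le> (\<integral>\<omega>. (F (Y \<omega>))\<^sup>2 \<partial>M) - (\<integral>p. max (F (Y (fst p))) (F (Y (snd p))) \<partial>(M \<Otimes>\<^sub>M M))"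
proof -
  have "0 \<le> (\<integral>u. (prob {\<omega> \<in> space M. F (Y \<omega>) \<le> u} - u)\<^sup>2 \<partial>restrict_space lborel {0..1})"
    by (rule Bochner_Integration.integral_nonneg) simp
  then show ?thesis
    using cramer_von_mises_identity[of "\<lambda>\<omega>. F (Y \<omega>)"] F_nonneg F_le_1 by simp
qed

lemma integral_F_square_minus_max_eq:
  "(\<integral>\<omega>. (F (Z \<omega>))\<^sup>2 \<partial>M) - (\<integral>p. max (F (Z (fst p))) (F (Z (snd p))) \<partial>(M \<Otimes>\<^sub>M M)) = - 1/3"
proof -
  have "(\<integral>u. (prob {\<omega> \<in> space M. F (Z \<omega>) \<le> u} - u)\<^sup>2 \<partial>restrict_space lborel {0..1}) = 0"
    by (subst Bochner_Integration.integral_cong[where g="\<lambda>_. 0"]) (auto simp: prob_F_Z_le space_restrict_space)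
  then show ?thesis
    using cramer_von_mises_identity[of "\<lambda>\<omega>. F (Z \<omega>)"] F_nonneg F_le_1 by simp
qed

end

locale strictly_increasing_cdf_rv = continuous_cdf_rv +
  assumes strict_mono_on_support: "strict_mono_on (dist_support (distr M borel Z)) F"
    and is_interval_support: "is_interval (dist_support (distr M borel Z))"
begin

lemma F_less:
  assumes "0 < F x" "F y < 1" "x < y"
  shows "F x < F y"
proof -
  obtain p where p: "p \<in> dist_support (distr M borel Z)" "p \<le> x"
    using dist_support_point_le[OF assms(1)] by blast
  obtain q where q: "q \<in> dist_support (distr M borel Z)" "y < q"
    using dist_support_point_gt[OF assms(2)] by blast
  have "x \<in> dist_support (distr M borel Z)" "y \<in> dist_support (distr M borel Z)"
    using mem_is_interval_1_I[OF is_interval_support p(1) q(1)] p(2) q(2) assms(3) by auto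
  then show ?thesis
    using strict_mono_onD[OF strict_mono_on_support] assms(3) by blast
qed

text \<open>On the compact band \<open>\<delta> \<le> F x \<le> 1 - \<delta>\<close> the continuous gap
  \<open>min (F (x + \<epsilon>) - F x) (F x - F (x - \<epsilon>))\<close> is positive, by strict monotonicity on the support
  interval, hence bounded below by some \<open>\<eta> > 0\<close>.\<close>

lemma F_separation:
  assumes "0 < \<epsilon>" "0 < \<delta>" "\<delta> < 1"
  obtains \<eta> where "0 < \<eta>"
    "\<And>x y. \<delta> \<le> F x \<Longrightarrow> F x \<le> 1 - \<delta> \<Longrightarrow> \<epsilon> < \<bar>x - y\<bar> \<Longrightarrow> \<eta> \<le> \<bar>F x - F y\<bar>"
proof -
  define K where "K = {x. \<delta> \<le> F x \<and> F x \<le> 1 - \<delta>}"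
  define D where "D x = min (F (x + \<epsilon>) - F x) (F x - F (x - \<epsilon>))" for x
  have D_pos: "0 < D x" if "x \<in> K" for x
  proof -
    have "F x < F (x + \<epsilon>)"
      using F_less[of x "x + \<epsilon>"] that assms by (cases "F (x + \<epsilon>) < 1") (auto simp: K_def not_less)
    moreover have "F (x - \<epsilon>) < F x"
      using F_less[of "x - \<epsilon>" x] that assms F_nonneg[of "x - \<epsilon>"]
      by (cases "0 < F (x - \<epsilon>)") (auto simp: K_def not_less)
    ultimately show ?thesis by (simp add: D_def)
  qed
  obtain L R where L: "\<And>x. x \<le> L \<Longrightarrow> F x < \<delta>" and R: "\<And>x. R \<le> x \<Longrightarrow> 1 - \<delta> < F x"
    using F_tails[OF assms(2,3)] by blast
  have "K \<subseteq> {L..R}"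
    using L R by (force simp: K_def not_less[symmetric])
  moreover have "closed K"
    unfolding K_def Collect_conj_eq by (intro closed_Int closed_Collect_le continuous_on_F continuous_on_const)
  ultimately have "compact K"
    by (metis bounded_closed_interval bounded_subset compact_eq_bounded_closed)
  have "continuous_on K D"
    unfolding D_def by (intro continuous_intros continuous_on_compose2[OF continuous_on_F]) auto
  show ?thesis
  proof (cases "K = {}")
    case True
    then show ?thesis by (intro that[of 1]) (auto simp: K_def)
  next
    case False
    then obtain x0 where x0: "x0 \<in> K" "\<And>x. x \<in> K \<Longrightarrow> D x0 \<le> D x"
      using continuous_attains_inf[OF \<open>compact K\<close> _ \<open>continuous_on K D\<close>] by blast
    show ?thesis
    proof (rule that[OF D_pos[OF x0(1)]])
      fix x y assume x: "\<delta> \<le> F x" "F x \<le> 1 - \<delta>" and xy: "\<epsilon> < \<bar>x - y\<bar>"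
      have "D x0 \<le> D x" using x0(2) x by (simp add: K_def)
      moreover have "F (x + \<epsilon>) \<le> F y" if "x < y" using xy that by (intro F_mono) auto
      moreover have "F y \<le> F (x - \<epsilon>)" if "\<not> x < y" using xy that by (intro F_mono) auto
      ultimately show "D x0 \<le> \<bar>F x - F y\<bar>" unfolding D_def by (cases "x < y") auto
    qed
  qed
qed

lemma prob_abs_diff_gt_le:
  assumes [measurable]: "Y \<in> borel_measurable M" and "0 < \<delta>" "\<delta> < 1" "0 < \<eta>"
    and sep: "\<And>x y. \<delta> \<le> F x \<Longrightarrow> F x \<le> 1 - \<delta> \<Longrightarrow> \<epsilon> < \<bar>x - y\<bar> \<Longrightarrow> \<eta> \<le> \<bar>F x - F y\<bar>"
  shows "prob {\<omega> \<in> space M. \<epsilon> < \<bar>Y \<omega> - Z \<omega>\<bar>} \<le> 2 * \<delta> + L1_dist_comp M F Y Z / \<eta>"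
proof -
  let ?A = "{\<omega> \<in> space M. F (Z \<omega>) \<le> \<delta>}"
  let ?B = "space M - {\<omega> \<in> space M. F (Z \<omega>) \<le> 1 - \<delta>}"
  let ?C = "{\<omega> \<in> space M. \<eta> \<le> \<bar>F (Y \<omega>) - F (Z \<omega>)\<bar>}"
  have events: "?A \<in> events" "?B \<in> events" "?C \<in> events" by measurable
  have "{\<omega> \<in> space M. \<epsilon> < \<bar>Y \<omega> - Z \<omega>\<bar>} \<subseteq> ?A \<union> ?B \<union> ?C"
    using sep by (force simp: abs_minus_commute)
  then have "prob {\<omega> \<in> space M. \<epsilon> < \<bar>Y \<omega> - Z \<omega>\<bar>} \<le> prob (?A \<union> ?B \<union> ?C)"
    using events by (intro finite_measure_mono) auto
  also have "\<dots> \<le> prob (?A \<union> ?B) + prob ?C"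
    using events by (intro measure_Un_le) auto
  also have "\<dots> \<le> prob ?A + prob ?B + prob ?C"
    using measure_Un_le[OF events(1,2)] by simp
  also have "prob ?A + prob ?B = 2 * \<delta>"
    using assms(2,3) by (simp add: prob_compl prob_F_Z_le)
  also have "prob ?C \<le> L1_dist_comp M F Y Z / \<eta>"
    unfolding L1_dist_comp_def
    by (rule integral_Markov_inequality_measure) (auto simp: \<open>0 < \<eta>\<close>)
  finally show ?thesis by simp
qed

lemma conv_in_prob_if_L1_dist_comp_tendsto:
  assumes meas: "\<forall>\<^sub>F n in sequentially. Y n \<in> borel_measurable M"
    and lim: "(\<lambda>n. L1_dist_comp M F (Y n) Z) \<longlonglongrightarrow> 0"
  shows "conv_in_prob M Y Z"
  unfolding conv_in_prob_def
proof (intro allI impI)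
  fix \<epsilon> :: real assume "0 < \<epsilon>"
  show "(\<lambda>n. prob {\<omega> \<in> space M. \<bar>Y n \<omega> - Z \<omega>\<bar> > \<epsilon>}) \<longlonglongrightarrow> 0"
  proof (rule order_tendstoI)
    fix r :: real assume "0 < r"
    define \<delta> where "\<delta> = min (r/4) (1/4)"
    have \<delta>: "0 < \<delta>" "\<delta> < 1" "\<delta> \<le> r/4" using \<open>0 < r\<close> by (auto simp: \<delta>_def)
    obtain \<eta> where \<eta>: "0 < \<eta>"
      "\<And>x y. \<delta> \<le> F x \<Longrightarrow> F x \<le> 1 - \<delta> \<Longrightarrow> \<epsilon> < \<bar>x - y\<bar> \<Longrightarrow> \<eta> \<le> \<bar>F x - F y\<bar>"
      using F_separation[OF \<open>0 < \<epsilon>\<close> \<delta>(1,2)] by blast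
    have "\<forall>\<^sub>F n in sequentially. L1_dist_comp M F (Y n) Z < \<eta> * (r/4)"
      by (rule order_tendstoD(2)[OF lim]) (use \<eta>(1) \<open>0 < r\<close> in simp)
    with meas show "\<forall>\<^sub>F n in sequentially. prob {\<omega> \<in> space M. \<bar>Y n \<omega> - Z \<omega>\<bar> > \<epsilon>} < r"
    proof eventually_elim
      case (elim n)
      have "L1_dist_comp M F (Y n) Z / \<eta> < r/4"
        using elim(2) \<eta>(1) by (simp add: field_simps)
      moreover have "prob {\<omega> \<in> space M. \<epsilon> < \<bar>Y n \<omega> - Z \<omega>\<bar>} \<le> 2 * \<delta> + L1_dist_comp M F (Y n) Z / \<eta>"
        by (rule prob_abs_diff_gt_le[OF elim(1) \<delta>(1,2) \<eta>(1)]) (use \<eta>(2) in blast)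
      ultimately show ?case using \<delta>(3) \<open>0 < r\<close> by linarith
    qed
  qed (use measure_nonneg order_less_le_trans in \<open>blast intro: always_eventually\<close>)
qed

end

lemma (in prob_space) L1_dist_comp_le_modulus:
  fixes f :: "real \<Rightarrow> real"
  assumes "0 \<le> \<epsilon>" and modulus: "\<And>x y. \<bar>y - x\<bar> \<le> \<epsilon> \<Longrightarrow> \<bar>f y - f x\<bar> \<le> e"
    and bound: "\<And>x. \<bar>f x\<bar> \<le> B"
    and [measurable]: "f \<in> borel_measurable borel" "Y \<in> borel_measurable M" "Z \<in> borel_measurable M"
  shows "L1_dist_comp M f Y Z \<le> e + 2 * B * prob {\<omega> \<in> space M. \<epsilon> < \<bar>Y \<omega> - Z \<omega>\<bar>}"
proof -
  define C where "C = {\<omega> \<in> space M. \<epsilon> < \<bar>Y \<omega> - Z \<omega>\<bar>}"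
  have [measurable]: "C \<in> events" unfolding C_def by measurable
  have diff_le: "\<bar>f x - f y\<bar> \<le> 2 * B" for x y
    using bound[of x] bound[of y] by (simp add: abs_le_iff)
  have "0 \<le> e" using modulus[of 0 0] \<open>0 \<le> \<epsilon>\<close> by simp
  have "L1_dist_comp M f Y Z \<le> (\<integral>\<omega>. e + 2 * B * indicator C \<omega> \<partial>M)"
    unfolding L1_dist_comp_def
  proof (rule integral_mono)
    show "integrable M (\<lambda>\<omega>. \<bar>f (Y \<omega>) - f (Z \<omega>)\<bar>)"
      using diff_le by (intro integrable_const_bound[where B="2 * B"] AE_I2) auto
    show "integrable M (\<lambda>\<omega>. e + 2 * B * indicator C \<omega>)"
      by (auto simp: less_top[symmetric])
    show "\<bar>f (Y \<omega>) - f (Z \<omega>)\<bar> \<le> e + 2 * B * indicator C \<omega>" if "\<omega> \<in> space M" for \<omega>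
      using that \<open>0 \<le> e\<close> diff_le[of "Y \<omega>" "Z \<omega>"] modulus[of "Y \<omega>" "Z \<omega>"]
      by (cases "\<omega> \<in> C") (auto simp: C_def not_less)
  qed
  also have "\<dots> = e + 2 * B * prob C"
    by (subst Bochner_Integration.integral_add) (auto simp: prob_space less_top[symmetric])
  finally show ?thesis by (simp add: C_def)
qed

lemma (in prob_space) tendsto_L1_dist_comp_if_conv_in_prob:
  fixes f :: "real \<Rightarrow> real"
  assumes f: "uniformly_continuous_on UNIV f" "\<And>x. \<bar>f x\<bar> \<le> B"
    and [measurable]: "\<And>n. Y n \<in> borel_measurable M" "Z \<in> borel_measurable M"
    and conv: "conv_in_prob M Y Z"
  shows "(\<lambda>n. L1_dist_comp M f (Y n) Z) \<longlonglongrightarrow> 0"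
proof (rule order_tendstoI)
  fix r :: real assume "0 < r"
  have [measurable]: "f \<in> borel_measurable borel"
    using f(1) by (intro borel_measurable_continuous_onI uniformly_continuous_imp_continuous)
  have "0 \<le> B" using f(2)[of 0] by simp
  obtain \<rho> where "0 < \<rho>" and \<rho>: "\<And>x y. dist y x < \<rho> \<Longrightarrow> dist (f y) (f x) < r/2"
    using f(1) \<open>0 < r\<close> unfolding uniformly_continuous_on_def by (metis UNIV_I half_gt_zero)
  have modulus: "\<bar>f y - f x\<bar> \<le> r/2" if "\<bar>y - x\<bar> \<le> \<rho>/2" for x y
    using \<rho>[of y x] that \<open>0 < \<rho>\<close> by (simp add: dist_real_def)
  have "(\<lambda>n. prob {\<omega> \<in> space M. \<bar>Y n \<omega> - Z \<omega>\<bar> > \<rho>/2}) \<longlonglongrightarrow> 0"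
    using conv \<open>0 < \<rho>\<close> unfolding conv_in_prob_def by (meson half_gt_zero)
  then have "\<forall>\<^sub>F n in sequentially. prob {\<omega> \<in> space M. \<bar>Y n \<omega> - Z \<omega>\<bar> > \<rho>/2} < r / (4 * B + 1)"
    by (rule order_tendstoD(2)) (use \<open>0 < r\<close> \<open>0 \<le> B\<close> in simp)
  then show "\<forall>\<^sub>F n in sequentially. L1_dist_comp M f (Y n) Z < r"
  proof eventually_elim
    case (elim n)
    have "L1_dist_comp M f (Y n) Z \<le> r/2 + 2 * B * prob {\<omega> \<in> space M. \<rho>/2 < \<bar>Y n \<omega> - Z \<omega>\<bar>}"
      using \<open>0 < \<rho>\<close> modulus f(2) by (intro L1_dist_comp_le_modulus) auto
    also have "2 * B * prob {\<omega> \<in> space M. \<rho>/2 < \<bar>Y n \<omega> - Z \<omega>\<bar>} \<le> 2 * B * (r / (4 * B + 1))"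
      using elim \<open>0 \<le> B\<close> by (intro mult_left_mono) auto
    also have "2 * B * (r / (4 * B + 1)) < r/2"
      using \<open>0 \<le> B\<close> \<open>0 < r\<close> by (simp add: field_simps)
    finally show ?case by simp
  qed
qed (use L1_dist_comp_nonneg order_less_le_trans in \<open>blast intro: always_eventually\<close>)

lemma measurable_predictor:
  assumes "\<And>s. X s \<in> borel_measurable M"
    and "\<Lambda> \<subseteq> PiE {..<n} (\<lambda>_. UNIV)"
    and g: "(\<lambda>(l, x). g n l x) \<in> borel_measurable
      (restrict_space (PiM {..<n} (\<lambda>_. borel)) \<Lambda> \<Otimes>\<^sub>M PiM {..<n} (\<lambda>_. borel))"
    and "l \<in> \<Lambda>"
  shows "predictor X tp g n l \<in> borel_measurable M"
proof -
  have "(\<lambda>\<omega>. l) \<in> M \<rightarrow>\<^sub>M restrict_space (PiM {..<n} (\<lambda>_. borel)) \<Lambda>"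
    using assms(2,4) by (intro measurable_const) (auto simp: space_restrict_space space_PiM)
  moreover have "obs_vec X tp n \<in> M \<rightarrow>\<^sub>M PiM {..<n} (\<lambda>_. borel)"
    unfolding obs_vec_def[abs_def] using assms(1) by (intro measurable_restrict) simp
  ultimately have "(\<lambda>\<omega>. (l, obs_vec X tp n \<omega>))
      \<in> M \<rightarrow>\<^sub>M restrict_space (PiM {..<n} (\<lambda>_. borel)) \<Lambda> \<Otimes>\<^sub>M PiM {..<n} (\<lambda>_. borel)"
    by (rule measurable_Pair)
  from measurable_comp[OF this g] show ?thesis
    unfolding predictor_def[abs_def] by (simp add: comp_def)
qed

lemma nearest_point_tendsto:
  fixes tp :: "nat \<Rightarrow> nat \<Rightarrow> 'd::real_normed_vector"
  assumes "(\<lambda>n. Min {norm (tp n k - t) | k. k < n}) \<longlonglongrightarrow> 0"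
  obtains kk where "\<And>n. 1 \<le> n \<Longrightarrow> kk n < n" "(\<lambda>n. tp n (kk n)) \<longlonglongrightarrow> t"
proof -
  have "\<exists>k<n. norm (tp n k - t) = Min {norm (tp n k - t) | k. k < n}" if "1 \<le> n" for n
  proof -
    have "norm (tp n 0 - t) \<in> {norm (tp n k - t) | k. k < n}"
      using that by auto
    then have "{norm (tp n k - t) | k. k < n} \<noteq> {}" by blast
    then
    have "Min {norm (tp n k - t) | k. k < n} \<in> {norm (tp n k - t) | k. k < n}"
      by (intro Min_in) simp_all
    then obtain k where "k < n" "Min {norm (tp n k - t) | k. k < n} = norm (tp n k - t)"
      by blast
    then show ?thesis by (intro exI[of _ k]) simp
  qed
  then have "\<forall>n. \<exists>k. 1 \<le> n \<longrightarrow> k < n \<and> norm (tp n k - t) = Min {norm (tp n k - t) | k. k < n}"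
    by blast
  from choice[OF this] obtain kk
    where kk: "\<And>n. 1 \<le> n \<Longrightarrow> kk n < n \<and> norm (tp n (kk n) - t) = Min {norm (tp n k - t) | k. k < n}"
    by blast
  have "(\<lambda>n. dist (tp n (kk n)) t) \<longlonglongrightarrow> 0"
  proof (rule Lim_transform_eventually[OF assms])
    show "\<forall>\<^sub>F n in sequentially. Min {norm (tp n k - t) | k. k < n} = dist (tp n (kk n)) t"
      using eventually_ge_at_top[of 1] by eventually_elim (use kk in \<open>simp add: dist_norm\<close>)
  qed
  then have "(\<lambda>n. tp n (kk n)) \<longlonglongrightarrow> t"
    by (rule tendsto_dist_iff[THEN iffD2])
  with kk show ?thesis by (intro that) simp_all
qed

lemma criterion_minimizer_L1_dist_comp_le:
  fixes X :: "'d::euclidean_space \<Rightarrow> 'a \<Rightarrow> real"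
  assumes "prob_space M" "X t \<in> borel_measurable M"
    and "\<And>x. measure M {\<omega> \<in> space M. X t \<omega> \<le> x} = F x" "continuous_on UNIV F" "0 < \<gamma>"
    and measurable: "\<And>l. l \<in> \<Lambda> n \<Longrightarrow> predictor X tp g n l \<in> borel_measurable M"
    and minimizer:
      "(lh \<in> Lambda_g M X tp g \<Lambda> F n \<and>
          (\<forall>l \<in> Lambda_g M X tp g \<Lambda> F n. crit_a M X tp g F t n lh \<le> crit_a M X tp g F t n l))
       \<or> (lh \<in> \<Lambda> n \<and> (\<forall>l \<in> \<Lambda> n. crit_b M X tp g F t n lh \<le> crit_b M X tp g F t n l))
       \<or> (lh \<in> \<Lambda> n \<and> (\<forall>l \<in> \<Lambda> n. crit_c M X tp g F t \<gamma> n lh \<le> crit_c M X tp g F t \<gamma> n l))"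
    and lc: "lc \<in> Lambda_g M X tp g \<Lambda> F n"
    and lc_Y: "AE \<omega> in M. predictor X tp g n lc \<omega> = Y \<omega>" and "Y \<in> borel_measurable M"
  shows "L1_dist_comp M F (predictor X tp g n lh) (X t) \<le> L1_dist_comp M F Y (X t)"
proof -
  interpret continuous_cdf_rv M "X t" F
    using assms(1-4) by (simp add: continuous_cdf_rv_def continuous_cdf_rv_axioms_def)
  let ?Yh = "predictor X tp g n lh" and ?Yc = "predictor X tp g n lc"
  have lc': "lc \<in> \<Lambda> n" "\<And>x. prob {\<omega> \<in> space M. ?Yc \<omega> \<le> x} = F x"
    using lc by (auto simp: Lambda_g_def)
  have "lh \<in> \<Lambda> n" using minimizer by (auto simp: Lambda_g_def)
  then have Y_measurable[measurable]: "?Yh \<in> borel_measurable M" "?Yc \<in> borel_measurable M"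
    using measurable lc'(1) by auto
  have "L1_dist_comp M F ?Yc (X t) = L1_dist_comp M F Y (X t)"
    unfolding L1_dist_comp_def using lc_Y \<open>Y \<in> borel_measurable M\<close>
    by (intro integral_cong_AE) (measurable, auto)
  moreover have Yc_mean: "(\<integral>\<omega>. F (?Yc \<omega>) \<partial>M) = (\<integral>\<omega>. F (X t \<omega>) \<partial>M)"
    using lc'(2) by (intro integral_comp_eq_if_same_cdf) auto
  note max_h = integral_F_max[OF Y_measurable(1)] and max_c = integral_F_max[OF Y_measurable(2)]
  from minimizer consider
      (a) "lh \<in> Lambda_g M X tp g \<Lambda> F n" "crit_a M X tp g F t n lh \<le> crit_a M X tp g F t n lc"
    | (b) "crit_b M X tp g F t n lh \<le> crit_b M X tp g F t n lc"
    | (c) "crit_c M X tp g F t \<gamma> n lh \<le> crit_c M X tp g F t \<gamma> n lc"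
    using lc lc'(1) by blast
  then have "L1_dist_comp M F ?Yh (X t) \<le> L1_dist_comp M F ?Yc (X t)"
  proof cases
    case a
    then have "(\<integral>\<omega>. F (?Yh \<omega>) \<partial>M) = (\<integral>\<omega>. F (X t \<omega>) \<partial>M)"
      by (intro integral_comp_eq_if_same_cdf) (auto simp: Lambda_g_def)
    with a(2) show ?thesis using max_h max_c Yc_mean unfolding crit_a_def by linarith
  next
    case b
    then show ?thesis using max_h max_c unfolding crit_b_def by linarith
  next
    case c
    interpret Yc: continuous_cdf_rv M ?Yc F
      using lc'(2) continuous_on_F by unfold_locales auto
    have "\<gamma> * (- 1/3) \<le> \<gamma> * ((\<integral>\<omega>. (F (?Yh \<omega>))\<^sup>2 \<partial>M)
        - (\<integral>p. max (F (?Yh (fst p))) (F (?Yh (snd p))) \<partial>(M \<Otimes>\<^sub>M M)))"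
      using \<open>0 < \<gamma>\<close> integral_F_square_minus_max_ge[of ?Yh] by (intro mult_left_mono) auto
    with c show ?thesis
      using max_h max_c unfolding crit_c_def crit_b_def Yc.integral_F_square_minus_max_eq by linarith
  qed
  ultimately show ?thesis by simp
qed

text \<open>\<open>F\<close> is assumed directly.\<close>

theorem mainTheorem12:
  fixes M :: "'a measure"
    and X :: "'d::euclidean_space \<Rightarrow> 'a \<Rightarrow> real"
    and F :: "real \<Rightarrow> real"
    and t :: 'd
    and tp :: "nat \<Rightarrow> nat \<Rightarrow> 'd"
    and \<Lambda> :: "nat \<Rightarrow> (nat \<Rightarrow> real) set"
    and g :: "nat \<Rightarrow> (nat \<Rightarrow> real) \<Rightarrow> (nat \<Rightarrow> real) \<Rightarrow> real"
    and lamhat :: "nat \<Rightarrow> (nat \<Rightarrow> real)"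
    and \<gamma> :: real
  assumes "prob_space M"
    and "\<And>s. X s \<in> borel_measurable M"
    and "strictly_stationary M X"
    and "stoch_continuous M X"
    and "\<And>s x. measure M {\<omega> \<in> space M. X s \<omega> \<le> x} = F x"
    and "continuous_on UNIV F"
    and "strict_mono_on (dist_support (distr M borel (X t))) F"
    and "is_interval (dist_support (distr M borel (X t)))"
    and "\<And>n. n \<ge> 1 \<Longrightarrow> \<Lambda> n \<subseteq> PiE {..<n} (\<lambda>_. UNIV)"
    and "\<And>n. n \<ge> 1 \<Longrightarrow> (\<lambda>(l, x). g n l x) \<in> borel_measurable
            (restrict_space (PiM {..<n} (\<lambda>_. borel)) (\<Lambda> n) \<Otimes>\<^sub>M PiM {..<n} (\<lambda>_. borel))"
    and "\<And>n k. n \<ge> 1 \<Longrightarrow> k < n \<Longrightarrow>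
            \<exists>l \<in> Lambda_g M X tp g \<Lambda> F n.
              AE \<omega> in M. predictor X tp g n l \<omega> = X (tp n k) \<omega>"
    and "(\<lambda>n. Min {norm (tp n k - t) | k. k < n}) \<longlonglongrightarrow> 0"
    and "\<gamma> > 0"
    and "(\<forall>n\<ge>1. lamhat n \<in> Lambda_g M X tp g \<Lambda> F n \<and>
            (\<forall>l \<in> Lambda_g M X tp g \<Lambda> F n. crit_a M X tp g F t n (lamhat n) \<le> crit_a M X tp g F t n l))
       \<or> (\<forall>n\<ge>1. lamhat n \<in> \<Lambda> n \<and>
            (\<forall>l \<in> \<Lambda> n. crit_b M X tp g F t n (lamhat n) \<le> crit_b M X tp g F t n l))
       \<or> (\<forall>n\<ge>1. lamhat n \<in> \<Lambda> n \<and>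
            (\<forall>l \<in> \<Lambda> n. crit_c M X tp g F t \<gamma> n (lamhat n) \<le> crit_c M X tp g F t \<gamma> n l))"
  shows "conv_in_prob M (\<lambda>n. predictor X tp g n (lamhat n)) (X t)"
proof -
  interpret strictly_increasing_cdf_rv M "X t" F
    using assms(1,2,5-8)
    by (intro strictly_increasing_cdf_rv.intro continuous_cdf_rv.intro continuous_cdf_rv_axioms.intro
        strictly_increasing_cdf_rv_axioms.intro) auto
  obtain kk where kk: "\<And>n. 1 \<le> n \<Longrightarrow> kk n < n" and "(\<lambda>n. tp n (kk n)) \<longlonglongrightarrow> t"
    using nearest_point_tendsto[OF assms(12)] by blast
  then have "conv_in_prob M (\<lambda>n. X (tp n (kk n))) (X t)"
    using assms(4) unfolding stoch_continuous_def by blast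
  then have nearest: "(\<lambda>n. L1_dist_comp M F (X (tp n (kk n))) (X t)) \<longlonglongrightarrow> 0"
    by (rule tendsto_L1_dist_comp_if_conv_in_prob[OF uniformly_continuous_F abs_F_le_1 assms(2,2)])
  have dominated: "\<forall>\<^sub>F n in sequentially. predictor X tp g n (lamhat n) \<in> borel_measurable M
      \<and> L1_dist_comp M F (predictor X tp g n (lamhat n)) (X t) \<le> L1_dist_comp M F (X (tp n (kk n))) (X t)"
    using eventually_ge_at_top[of 1]
  proof eventually_elim
    case (elim n)
    note measurable =
      measurable_predictor[where X=X and tp=tp and g=g and n=n, OF assms(2) assms(9,10)[OF elim]]
    obtain lc where "lc \<in> Lambda_g M X tp g \<Lambda> F n"
      and "AE \<omega> in M. predictor X tp g n lc \<omega> = X (tp n (kk n)) \<omega>"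
      using assms(11)[OF elim kk[OF elim]] by blast
    from criterion_minimizer_L1_dist_comp_le[OF assms(1,2,5,6,13) measurable _ this assms(2)]
    have "L1_dist_comp M F (predictor X tp g n (lamhat n)) (X t) \<le> L1_dist_comp M F (X (tp n (kk n))) (X t)"
      using assms(14) elim by blast
    moreover have "lamhat n \<in> \<Lambda> n" using assms(14) elim unfolding Lambda_g_def by blast
    ultimately show ?case using measurable by blast
  qed
  have "(\<lambda>n. L1_dist_comp M F (predictor X tp g n (lamhat n)) (X t)) \<longlonglongrightarrow> 0"
    by (rule tendsto_sandwich[OF _ _ tendsto_const nearest])
       (simp_all add: L1_dist_comp_nonneg eventually_mono[OF dominated])
  moreover have "\<forall>\<^sub>F n in sequentially. predictor X tp g n (lamhat n) \<in> borel_measurable M"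
    using dominated by (rule eventually_mono) simp
  ultimately show ?thesis
    by (intro conv_in_prob_if_L1_dist_comp_tendsto)
qed

end
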